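(* Let $\dot\Theta_\theta$ be a subset of a Hilbert space with inner product $\langle\cdot,\cdot\rangle_\theta$, let $H$ be a Hilbert space, let $A_\theta:\operatorname{lin}\dot\Theta_\theta\to H$ be a continuous linear operator and suppose its adjoint $A_\theta^\star:H\to\overline{\operatorname{lin}}\,\dot\Theta_\theta$ is injective. Let $\mathcal G$ be a dense subspace of $H$. Then $\tilde\chi_\theta\in\overline{\operatorname{lin}}\,\dot\Theta_\theta$ lies in $\operatorname{ran}A_\theta^\star$ if and only if (i) there is a sequence $\chi_n\in A_\theta^\star(\mathcal G)$ with $\chi_n\to\tilde\chi_\theta$ as $n\to\infty$, and (ii) $(A_\theta^\star)^{-1}\chi_n$ converges in $H$ to some $\psi\in H$. In this case $A_\theta^\star\psi=\tilde\chi_\theta$, and $\Pi_{\overline{\operatorname{ran}}A_\theta}\psi=\psi=(A_\theta^\star)^\dagger\tilde\chi_\theta$, i.e. $\psi$ is the efficient influence function.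
   Context: $\Pi_{\overline{\operatorname{ran}}A_\theta}$ denotes the orthogonal projection onto the closure of the range of $A_\theta$. $(A_\theta^\star)^\dagger$ is the Moore–Penrose pseudoinverse: for $\zeta\in\operatorname{ran}A_\theta^\star$, $(A_\theta^\star)^\dagger\zeta$ is the unique element of $(\ker A_\theta^\star)^\perp$ mapped to $\zeta$. In the semiparametric setting where $A_\theta$ is the generalized score operator of a model at $\theta$ and $\tilde\chi_\theta$ is the gradient of a pathwise differentiable parameter, the efficient influence function is $(A_\theta^\star)^\dagger\tilde\chi_\theta$. *)

theory Defs
  imports "HOL-Analysis.Analysis"
begin

definition bounded_linear_on :: "'a::real_normed_vector set \<Rightarrow> ('a \<Rightarrow> 'b::real_normed_vector) \<Rightarrow> bool" where
  "bounded_linear_on S A \<longleftrightarrow> subspace S \<and>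
     (\<forall>x\<in>S. \<forall>y\<in>S. A (x + y) = A x + A y) \<and>
     (\<forall>c. \<forall>x\<in>S. A (c *\<^sub>R x) = c *\<^sub>R A x) \<and>
     (\<exists>K. \<forall>x\<in>S. norm (A x) \<le> K * norm x)"

definition hadjoint :: "'a::real_inner set \<Rightarrow> ('a \<Rightarrow> 'b::real_inner) \<Rightarrow> 'b \<Rightarrow> 'a" where
  "hadjoint S A h = (THE y. y \<in> closure S \<and> (\<forall>g\<in>S. inner y g = inner h (A g)))"

definition orth_proj :: "'a::real_inner set \<Rightarrow> 'a \<Rightarrow> 'a" where
  "orth_proj M x = (THE y. y \<in> M \<and> (\<forall>m\<in>M. inner (x - y) m = 0))"

text \<open>Moore-Penrose pseudoinverse applied to an element of the range:
  the unique element of (ker T)^perp mapped to z.\<close>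
definition mp_pinv :: "('b::real_inner \<Rightarrow> 'a::real_inner) \<Rightarrow> 'a \<Rightarrow> 'b" where
  "mp_pinv T z = (THE x. x \<in> orthogonal_comp (T -` {0}) \<and> T x = z)"

end

theory Submission
  imports Defs
begin

text \<open>If \<open>\<chi>\<^sub>n = A\<^sup>\<star> g\<^sub>n\<close> with \<open>g\<^sub>n \<in> \<G>\<close>, \<open>\<chi>\<^sub>n \<rightarrow> \<chi>\<close> and \<open>g\<^sub>n \<rightarrow> \<psi>\<close>, continuity of the adjoint
  gives \<open>A\<^sup>\<star> \<psi> = \<chi>\<close>; conversely, if \<open>\<chi> = A\<^sup>\<star> \<psi>\<close>, approximate \<open>\<psi>\<close> from the dense \<open>\<G>\<close>.
  Since \<open>ker A\<^sup>\<star> = (ran A)\<^sup>\<bottom>\<close>, injectivity of the adjoint makes \<open>ran A\<close> dense, so the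
  projection onto its closure is the identity, and the pseudoinverse of an injective map is
  its inverse. The analytic input is the projection theorem in a Hilbert space, which yields
  the existence of the adjoint via a Riesz representation for functionals on a subspace.\<close>

lemma subspace_closure:
  fixes S :: "'a::real_normed_vector set"
  assumes "subspace S"
  shows "subspace (closure S)"
  unfolding subspace_def
proof (intro conjI ballI allI)
  show "0 \<in> closure S" using assms closure_subset subspace_0 by blast
next
  fix x y assume "x \<in> closure S" "y \<in> closure S"
  then obtain u v where u: "\<forall>n. u n \<in> S" "u \<longlonglongrightarrow> x" and v: "\<forall>n. v n \<in> S" "v \<longlonglongrightarrow> y"
    by (meson closure_sequential)
  have "\<forall>n. u n + v n \<in> S" using u v assms by (simp add: subspace_add)
  moreover have "(\<lambda>n. u n + v n) \<longlonglongrightarrow> x + y" using u v by (intro tendsto_add)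
  ultimately show "x + y \<in> closure S" by (meson closure_sequential)
next
  fix c x assume "x \<in> closure S"
  then obtain u where u: "\<forall>n. u n \<in> S" "u \<longlonglongrightarrow> x" by (meson closure_sequential)
  have "\<forall>n. c *\<^sub>R u n \<in> S" using u assms by (simp add: subspace_scale)
  moreover have "(\<lambda>n. c *\<^sub>R u n) \<longlonglongrightarrow> c *\<^sub>R x" using u by (intro tendsto_scaleR tendsto_const)
  ultimately show "c *\<^sub>R x \<in> closure S" by (meson closure_sequential)
qed

lemma inner_closure_le:
  fixes y :: "'a::real_inner"
  assumes "\<And>g. g \<in> S \<Longrightarrow> inner y g \<le> c * norm g" and "x \<in> closure S"
  shows "inner y x \<le> c * norm x"
proof -
  have "closure S \<subseteq> {g. inner y g \<le> c * norm g}"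
    using assms(1) by (intro closure_minimal closed_Collect_le continuous_intros) auto
  then show ?thesis using assms(2) by blast
qed

lemma orthogonal_closure_eq_0:
  fixes d :: "'a::real_inner"
  assumes "d \<in> closure S" and "\<And>g. g \<in> S \<Longrightarrow> inner d g = 0"
  shows "d = 0"
proof -
  have "closure S \<subseteq> {g. inner d g = 0}"
    using assms(2) by (intro closure_minimal closed_Collect_eq continuous_intros) auto
  then show ?thesis using assms(1) by auto
qed

lemma inner_eq_0_if_norm_le_all_perturbations:
  fixes v m :: "'a::real_inner"
  assumes "\<And>t::real. norm v \<le> norm (v - t *\<^sub>R m)"
  shows "inner v m = 0"
proof (cases "m = 0")
  case False
  define a where "a = inner v m"
  define b where "b = inner m m"
  have "b > 0" unfolding b_def using False by simp
  have "norm v^2 \<le> norm (v - (a/b) *\<^sub>R m)^2" using assms by (simp add: power_mono)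
  also have "\<dots> = norm v^2 - 2*(a/b)*a + (a/b)^2*b"
    unfolding power2_norm_eq_inner a_def b_def
    by (simp add: inner_diff inner_commute algebra_simps power2_eq_square)
  also have "\<dots> = norm v^2 - a^2/b" using \<open>b > 0\<close> by (simp add: power2_eq_square field_simps)
  finally have "a^2 / b \<le> 0" by linarith
  with \<open>b > 0\<close> show ?thesis unfolding a_def by (simp add: divide_le_0_iff)
qed simp

lemma Cauchy_minimizing_sequence:
  fixes x :: "'a::real_inner"
  assumes "convex N"
    and D_le: "\<And>n. n \<in> N \<Longrightarrow> D \<le> norm (x - n)^2"
    and s_in: "\<And>k. s k \<in> N"
    and s_le: "\<And>k. norm (x - s k)^2 < D + inverse (real (Suc k))"
  shows "Cauchy s"
proof -
  have bound: "norm (s i - s j)^2 \<le> 2 * inverse (real (Suc i)) + 2 * inverse (real (Suc j))" for i j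
  proof -
    define mid where "mid = (1/2) *\<^sub>R s i + (1/2) *\<^sub>R s j"
    have "mid \<in> N" unfolding mid_def using \<open>convex N\<close> s_in by (intro convexD) auto
    \<comment> \<open>Parallelogram law for \<open>x - s i\<close> and \<open>x - s j\<close>.\<close>
    have "norm (s i - s j)^2 = 2 * norm (x - s i)^2 + 2 * norm (x - s j)^2 - 4 * norm (x - mid)^2"
      unfolding mid_def power2_norm_eq_inner
      by (simp add: inner_diff inner_add inner_commute algebra_simps)
    then show ?thesis using s_le[of i] s_le[of j] D_le[OF \<open>mid \<in> N\<close>] by linarith
  qed
  show "Cauchy s"
  proof (rule CauchyI)
    fix e :: real assume "0 < e"
    obtain M :: nat where "4 / e^2 < real (Suc M)"
      by (metis reals_Archimedean2 less_Suc_eq of_nat_less_iff less_trans)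
    with \<open>0 < e\<close> have M: "4 * inverse (real (Suc M)) < e^2" by (simp add: field_simps)
    show "\<exists>M. \<forall>m\<ge>M. \<forall>n\<ge>M. norm (s m - s n) < e"
    proof (intro exI allI impI)
      fix m n assume "m \<ge> M" "n \<ge> M"
      then have "inverse (real (Suc m)) \<le> inverse (real (Suc M))"
        and "inverse (real (Suc n)) \<le> inverse (real (Suc M))"
        by (auto intro: le_imp_inverse_le)
      then have "norm (s m - s n)^2 < e^2" using bound[of m n] M by linarith
      then show "norm (s m - s n) < e" using \<open>0 < e\<close> by (simp add: power_less_imp_less_base)
    qed
  qed
qed

lemma closest_point_exists:
  fixes N :: "'a::{real_inner,complete_space} set"
  assumes "convex N" "closed N" "N \<noteq> {}"
  shows "\<exists>p\<in>N. \<forall>n\<in>N. norm (x - p) \<le> norm (x - n)"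
proof -
  define D where "D = (INF n\<in>N. norm (x - n)^2)"
  have bdd: "bdd_below ((\<lambda>n. norm (x - n)^2) ` N)" by (intro bdd_belowI[of _ 0]) auto
  have D_le: "D \<le> norm (x - n)^2" if "n \<in> N" for n
    unfolding D_def using bdd that by (rule cINF_lower)
  have "\<exists>n\<in>N. norm (x - n)^2 < D + inverse (real (Suc k))" for k
    using \<open>N \<noteq> {}\<close> bdd unfolding D_def
    by (subst cINF_less_iff[symmetric]) auto
  then obtain s where s_in: "\<And>k. s k \<in> N" and s_le: "\<And>k. norm (x - s k)^2 < D + inverse (real (Suc k))"
    by metis
  have "Cauchy s" using \<open>convex N\<close> D_le s_in s_le by (rule Cauchy_minimizing_sequence)
  then obtain p where "s \<longlonglongrightarrow> p" using Cauchy_convergent_iff convergent_def by blast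
  have "p \<in> N" using \<open>closed N\<close> \<open>s \<longlonglongrightarrow> p\<close> s_in closed_sequential_limits by blast
  have "(\<lambda>k. norm (x - s k)^2) \<longlonglongrightarrow> norm (x - p)^2" by (intro tendsto_intros \<open>s \<longlonglongrightarrow> p\<close>)
  moreover have "(\<lambda>k. D + inverse (real (Suc k))) \<longlonglongrightarrow> D" by (rule LIMSEQ_inverse_real_of_nat_add)
  ultimately have "norm (x - p)^2 \<le> D" by (rule LIMSEQ_le) (use s_le less_imp_le in auto)
  then have "norm (x - p) \<le> norm (x - n)" if "n \<in> N" for n
    using D_le[OF that] by (simp add: power2_le_imp_le)
  with \<open>p \<in> N\<close> show ?thesis by blast
qed

lemma orthogonal_projection_exists:
  fixes N :: "'a::{real_inner,complete_space} set"
  assumes "subspace N" "closed N"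
  shows "\<exists>p\<in>N. \<forall>m\<in>N. inner (x - p) m = 0"
proof -
  obtain p where "p \<in> N" and closest: "\<And>n. n \<in> N \<Longrightarrow> norm (x - p) \<le> norm (x - n)"
    using closest_point_exists[of N x] assms subspace_imp_convex subspace_0 by blast
  have "inner (x - p) m = 0" if "m \<in> N" for m
  proof (rule inner_eq_0_if_norm_le_all_perturbations)
    fix t :: real
    have "p + t *\<^sub>R m \<in> N" using assms \<open>p \<in> N\<close> \<open>m \<in> N\<close> by (simp add: subspace_add subspace_scale)
    then show "norm (x - p) \<le> norm (x - p - t *\<^sub>R m)" using closest by (simp add: diff_diff_add)
  qed
  with \<open>p \<in> N\<close> show ?thesis by blast
qed

lemma bounded_linear_onD:
  assumes "bounded_linear_on S A"
  shows "subspace S"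
    and "\<And>x y. x \<in> S \<Longrightarrow> y \<in> S \<Longrightarrow> A (x + y) = A x + A y"
    and "\<And>c x. x \<in> S \<Longrightarrow> A (c *\<^sub>R x) = c *\<^sub>R A x"
    and "\<exists>K. \<forall>x\<in>S. norm (A x) \<le> K * norm x"
  using assms unfolding bounded_linear_on_def by blast+

lemma bounded_linear_on_diff:
  assumes "bounded_linear_on S A" "x \<in> S" "y \<in> S"
  shows "A (x - y) = A x - A y"
proof -
  note A = bounded_linear_onD[OF assms(1)]
  have "x - y \<in> S" using A(1) assms(2,3) by (rule subspace_diff)
  then have "A x = A (x - y) + A y" using A(2)[of "x - y" y] assms(3) by simp
  then show ?thesis by simp
qed

lemma bounded_linear_on_0:
  assumes "bounded_linear_on S A"
  shows "A 0 = 0"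
  using bounded_linear_on_diff[OF assms] subspace_0[OF bounded_linear_onD(1)[OF assms]] by force

lemma subspace_image_bounded_linear_on:
  assumes "bounded_linear_on S A"
  shows "subspace (A ` S)"
  unfolding subspace_def
proof (intro conjI ballI allI)
  note A = bounded_linear_onD[OF assms]
  show "0 \<in> A ` S" using bounded_linear_on_0[OF assms] subspace_0[OF A(1)] by force
  have "A a + A b \<in> A ` S" if "a \<in> S" "b \<in> S" for a b
    using A(2)[OF that] subspace_add[OF A(1) that] by (metis image_eqI)
  then show "x + y \<in> A ` S" if "x \<in> A ` S" "y \<in> A ` S" for x y
    using that by blast
  have "c *\<^sub>R A a \<in> A ` S" if "a \<in> S" for c a
    using A(3)[OF that] subspace_scale[OF A(1) that] by (metis image_eqI)
  then show "c *\<^sub>R x \<in> A ` S" if "x \<in> A ` S" for c x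
    using that by blast
qed

lemma subspace_kernel_bounded_linear_on:
  assumes "bounded_linear_on S A"
  shows "subspace {x\<in>S. A x = 0}"
  using bounded_linear_onD[OF assms] bounded_linear_on_0[OF assms]
  by (auto simp: subspace_def)

lemma bounded_linear_on_inner_left:
  assumes "bounded_linear_on S A"
  shows "bounded_linear_on S (\<lambda>g. inner h (A g))"
proof -
  note A = bounded_linear_onD[OF assms]
  obtain K where K: "\<And>x. x \<in> S \<Longrightarrow> norm (A x) \<le> K * norm x" using A(4) by blast
  have "norm (inner h (A x)) \<le> (norm h * K) * norm x" if "x \<in> S" for x
  proof -
    have "norm (inner h (A x)) \<le> norm h * norm (A x)" using Cauchy_Schwarz_ineq2 by simp
    also have "\<dots> \<le> norm h * (K * norm x)" using K[OF that] by (simp add: mult_left_mono)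
    finally show ?thesis by simp
  qed
  then show ?thesis unfolding bounded_linear_on_def using A(1-3) by (auto simp: inner_add_right)
qed

lemma bounded_linear_on_vanishes_on_closure:
  assumes "bounded_linear_on S f" "Z \<subseteq> S" "\<And>z. z \<in> Z \<Longrightarrow> f z = 0"
    and "x \<in> S" "x \<in> closure Z"
  shows "f x = 0"
proof -
  obtain K where K: "\<And>y. y \<in> S \<Longrightarrow> norm (f y) \<le> K * norm y"
    using bounded_linear_onD(4)[OF assms(1)] by blast
  obtain k where k: "\<And>n. k n \<in> Z" "k \<longlonglongrightarrow> x" using assms(5) closure_sequential by metis
  have "norm (f x) \<le> K * norm (x - k n)" for n
  proof -
    have "k n \<in> S" using k(1) assms(2) by blast
    then have "f x = f (x - k n)" using bounded_linear_on_diff[OF assms(1) assms(4)] assms(3) k(1) by simp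
    then show ?thesis using K subspace_diff[OF bounded_linear_onD(1)[OF assms(1)] assms(4) \<open>k n \<in> S\<close>] by simp
  qed
  moreover have "(\<lambda>n. K * norm (x - k n)) \<longlonglongrightarrow> K * norm (x - x)"
    using k(2) by (intro tendsto_intros)
  ultimately have "norm (f x) \<le> K * norm (x - x)" by (intro LIMSEQ_le_const) auto
  then show ?thesis by simp
qed

lemma riesz_representation_on_subspace:
  fixes S :: "'a::{real_inner,complete_space} set" and f :: "'a \<Rightarrow> real"
  assumes f: "bounded_linear_on S f"
  shows "\<exists>y\<in>closure S. \<forall>g\<in>S. inner y g = f g"
proof (cases "\<forall>g\<in>S. f g = 0")
  case True
  then show ?thesis using subspace_0[OF bounded_linear_onD(1)[OF f]] closure_subset by force
next
  case False
  note S = bounded_linear_onD(1)[OF f] and f_scale = bounded_linear_onD(3)[OF f]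
  then obtain w0 where "w0 \<in> S" "f w0 \<noteq> 0" using False by blast
  define w where "w = (1 / f w0) *\<^sub>R w0"
  have "w \<in> S" unfolding w_def using S \<open>w0 \<in> S\<close> by (rule subspace_scale)
  have "f w = 1" unfolding w_def using \<open>w0 \<in> S\<close> \<open>f w0 \<noteq> 0\<close> f_scale by simp
  define Z where "Z = {g\<in>S. f g = 0}"
  have "subspace (closure Z)" unfolding Z_def
    by (intro subspace_closure subspace_kernel_bounded_linear_on f)
  \<comment> \<open>The component of \<open>w\<close> orthogonal to the kernel represents \<open>f\<close> up to scaling.\<close>
  then obtain p where "p \<in> closure Z" and z_orth: "\<And>m. m \<in> closure Z \<Longrightarrow> inner (w - p) m = 0"
    using orthogonal_projection_exists[of "closure Z" w] by blast
  define z where "z = w - p"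
  have "closure Z \<subseteq> closure S" unfolding Z_def by (intro closure_mono) auto
  then have "z \<in> closure S" unfolding z_def
    using \<open>w \<in> S\<close> \<open>p \<in> closure Z\<close> closure_subset
    by (intro subspace_diff[OF subspace_closure[OF S]]) auto
  have "w \<notin> closure Z"
  proof
    assume "w \<in> closure Z"
    have "f w = 0"
      by (rule bounded_linear_on_vanishes_on_closure[OF f _ _ \<open>w \<in> S\<close> \<open>w \<in> closure Z\<close>])
        (auto simp: Z_def)
    with \<open>f w = 1\<close> show False by simp
  qed
  then have "z \<noteq> 0" using \<open>p \<in> closure Z\<close> unfolding z_def by auto
  have "w = z + p" unfolding z_def by simp
  moreover have "inner z p = 0" unfolding z_def using z_orth[OF \<open>p \<in> closure Z\<close>] .
  ultimately have "inner z w = inner z z" by (simp add: inner_add_right)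
  have "inner z g = f g * inner z z" if "g \<in> S" for g
  proof -
    have "f g *\<^sub>R w \<in> S" using S \<open>w \<in> S\<close> by (rule subspace_scale)
    then have "g - f g *\<^sub>R w \<in> S" using S that by (intro subspace_diff)
    moreover have "f (g - f g *\<^sub>R w) = 0"
      using bounded_linear_on_diff[OF f that \<open>f g *\<^sub>R w \<in> S\<close>] f_scale[OF \<open>w \<in> S\<close>] \<open>f w = 1\<close> by simp
    ultimately have "g - f g *\<^sub>R w \<in> Z" unfolding Z_def by blast
    then have "inner z (g - f g *\<^sub>R w) = 0" using z_orth closure_subset unfolding z_def by blast
    then show ?thesis using \<open>inner z w = inner z z\<close> by (simp add: inner_diff_right)
  qed
  moreover have "(1 / inner z z) *\<^sub>R z \<in> closure S"
    using \<open>z \<in> closure S\<close> subspace_closure[OF S] by (rule subspace_scale[rotated])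
  ultimately show ?thesis using \<open>z \<noteq> 0\<close> by (intro bexI[of _ "(1 / inner z z) *\<^sub>R z"]) simp_all
qed

lemma hadjoint_unique:
  fixes S :: "'a::{real_inner,complete_space} set" and A :: "'a \<Rightarrow> 'b::real_inner"
  assumes "bounded_linear_on S A"
  shows "\<exists>!y. y \<in> closure S \<and> (\<forall>g\<in>S. inner y g = inner h (A g))"
proof (rule ex_ex1I)
  show "\<exists>y. y \<in> closure S \<and> (\<forall>g\<in>S. inner y g = inner h (A g))"
    using riesz_representation_on_subspace[OF bounded_linear_on_inner_left[OF assms]] by blast
next
  fix y1 y2
  assume y1: "y1 \<in> closure S \<and> (\<forall>g\<in>S. inner y1 g = inner h (A g))"
    and y2: "y2 \<in> closure S \<and> (\<forall>g\<in>S. inner y2 g = inner h (A g))"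
  have "y1 - y2 \<in> closure S"
    using y1 y2 subspace_closure[OF bounded_linear_onD(1)[OF assms]] by (blast intro: subspace_diff)
  moreover have "\<And>g. g \<in> S \<Longrightarrow> inner (y1 - y2) g = 0" using y1 y2 by (simp add: inner_diff_left)
  ultimately show "y1 = y2" using orthogonal_closure_eq_0 by fastforce
qed

lemma hadjoint_in_closure:
  fixes S :: "'a::{real_inner,complete_space} set" and A :: "'a \<Rightarrow> 'b::real_inner"
  assumes "bounded_linear_on S A"
  shows "hadjoint S A h \<in> closure S"
  unfolding hadjoint_def using theI'[OF hadjoint_unique[OF assms]] by blast

lemma inner_hadjoint:
  fixes S :: "'a::{real_inner,complete_space} set" and A :: "'a \<Rightarrow> 'b::real_inner"
  assumes "bounded_linear_on S A" "g \<in> S"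
  shows "inner (hadjoint S A h) g = inner h (A g)"
  unfolding hadjoint_def using theI'[OF hadjoint_unique[OF assms(1)]] assms(2) by blast

lemma hadjoint_eqI:
  fixes S :: "'a::{real_inner,complete_space} set" and A :: "'a \<Rightarrow> 'b::real_inner"
  assumes "bounded_linear_on S A" "y \<in> closure S" "\<And>g. g \<in> S \<Longrightarrow> inner y g = inner h (A g)"
  shows "hadjoint S A h = y"
  unfolding hadjoint_def using hadjoint_unique[OF assms(1)] assms(2,3) by (intro the1_equality) auto

lemma bounded_linear_hadjoint:
  fixes S :: "'a::{real_inner,complete_space} set" and A :: "'a \<Rightarrow> 'b::real_inner"
  assumes A: "bounded_linear_on S A"
  shows "bounded_linear (hadjoint S A)"
proof -
  let ?T = "hadjoint S A"
  have cS: "subspace (closure S)" using subspace_closure[OF bounded_linear_onD(1)[OF A]] .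
  obtain K0 where K0: "\<And>x. x \<in> S \<Longrightarrow> norm (A x) \<le> K0 * norm x"
    using bounded_linear_onD(4)[OF A] by blast
  define K where "K = max K0 0"
  have "K \<ge> 0" unfolding K_def by simp
  have K: "norm (A x) \<le> K * norm x" if "x \<in> S" for x
    using K0[OF that] mult_right_mono[of K0 K "norm x"] unfolding K_def by simp
  show ?thesis
  proof (rule bounded_linear_intro[where K = K])
    fix x y
    show "?T (x + y) = ?T x + ?T y"
      using A hadjoint_in_closure[OF A] subspace_add[OF cS]
      by (intro hadjoint_eqI) (simp_all add: inner_hadjoint inner_add_left)
  next
    fix r x
    show "?T (r *\<^sub>R x) = r *\<^sub>R ?T x"
      using A hadjoint_in_closure[OF A] subspace_scale[OF cS]
      by (intro hadjoint_eqI) (simp_all add: inner_hadjoint)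
  next
    fix x
    \<comment> \<open>Test \<open>?T x\<close> against itself, which lies in the closure of \<open>S\<close>.\<close>
    have "inner (?T x) g \<le> (norm x * K) * norm g" if "g \<in> S" for g
    proof -
      have "inner (?T x) g = inner x (A g)" using inner_hadjoint[OF A that] .
      also have "\<dots> \<le> norm x * norm (A g)" using Cauchy_Schwarz_ineq2 abs_le_D1 by blast
      also have "\<dots> \<le> norm x * (K * norm g)" using K[OF that] by (simp add: mult_left_mono)
      finally show ?thesis by simp
    qed
    then have "inner (?T x) (?T x) \<le> (norm x * K) * norm (?T x)"
      using hadjoint_in_closure[OF A] by (rule inner_closure_le)
    then have "norm (?T x) * norm (?T x) \<le> (norm x * K) * norm (?T x)"
      by (simp add: power2_norm_eq_inner[symmetric] power2_eq_square)
    then show "norm (?T x) \<le> norm x * K"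
      using \<open>K \<ge> 0\<close> by (cases "norm (?T x) = 0") (auto simp: mult_le_cancel_right)
  qed
qed

lemma hadjoint_eq_0_iff:
  fixes S :: "'a::{real_inner,complete_space} set" and A :: "'a \<Rightarrow> 'b::real_inner"
  assumes "bounded_linear_on S A"
  shows "hadjoint S A h = 0 \<longleftrightarrow> (\<forall>g\<in>S. inner h (A g) = 0)"
proof
  assume "hadjoint S A h = 0"
  then show "\<forall>g\<in>S. inner h (A g) = 0" using inner_hadjoint[OF assms, of _ h] by simp
next
  assume "\<forall>g\<in>S. inner h (A g) = 0"
  moreover have "0 \<in> closure S"
    using subspace_0[OF subspace_closure[OF bounded_linear_onD(1)[OF assms]]] .
  ultimately show "hadjoint S A h = 0" using assms by (intro hadjoint_eqI) auto
qed

lemma closure_eq_UNIV_if_orthogonal_comp_eq_0: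
  fixes M :: "'a::{real_inner,complete_space} set"
  assumes "subspace M" "orthogonal_comp M = {0}"
  shows "closure M = UNIV"
proof -
  have "x \<in> closure M" for x
  proof -
    obtain p where "p \<in> closure M" and "\<And>m. m \<in> closure M \<Longrightarrow> inner (x - p) m = 0"
      using orthogonal_projection_exists[OF subspace_closure[OF assms(1)] closed_closure] by blast
    then have "x - p \<in> orthogonal_comp M"
      using closure_subset unfolding orthogonal_comp_def orthogonal_def by (auto simp: inner_commute[of _ "x - p"])
    with assms(2) \<open>p \<in> closure M\<close> show ?thesis by simp
  qed
  then show ?thesis by blast
qed

lemma closure_image_eq_UNIV_if_inj_hadjoint:
  fixes S :: "'a::{real_inner,complete_space} set" and A :: "'a \<Rightarrow> 'b::{real_inner,complete_space}"
  assumes A: "bounded_linear_on S A" and inj: "inj (hadjoint S A)"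
  shows "closure (A ` S) = UNIV"
proof (rule closure_eq_UNIV_if_orthogonal_comp_eq_0)
  show "subspace (A ` S)" using A by (rule subspace_image_bounded_linear_on)
  have T0: "hadjoint S A 0 = 0" using linear_0 bounded_linear.linear[OF bounded_linear_hadjoint[OF A]] .
  have "h = 0" if "h \<in> orthogonal_comp (A ` S)" for h
  proof -
    have "inner h (A g) = 0" if "g \<in> S" for g
    proof -
      have "inner (A g) h = 0"
        using \<open>h \<in> orthogonal_comp (A ` S)\<close> \<open>g \<in> S\<close> unfolding orthogonal_comp_def orthogonal_def by simp
      then show ?thesis by (simp add: inner_commute)
    qed
    then have "hadjoint S A h = hadjoint S A 0" unfolding T0 using hadjoint_eq_0_iff[OF A] by blast
    then show "h = 0" by (rule injD[OF inj])
  qed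
  then show "orthogonal_comp (A ` S) = {0}" by (auto simp: orthogonal_comp_def orthogonal_def)
qed

lemma orth_proj_eq_self:
  fixes M :: "'a::real_inner set"
  assumes "subspace M" "x \<in> M"
  shows "orth_proj M x = x"
  unfolding orth_proj_def
proof (rule the_equality)
  show "x \<in> M \<and> (\<forall>m\<in>M. inner (x - x) m = 0)" using assms by simp
next
  fix y assume y: "y \<in> M \<and> (\<forall>m\<in>M. inner (x - y) m = 0)"
  then have "inner (x - y) (x - y) = 0" using assms subspace_diff by blast
  then show "y = x" by simp
qed

lemma mp_pinv_inj:
  assumes "linear T" "inj T"
  shows "mp_pinv T (T x) = x"
proof -
  have "T y = 0 \<longleftrightarrow> y = 0" for y using inj_eq[OF \<open>inj T\<close>, of y 0] linear_0[OF \<open>linear T\<close>] by simp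
  then have "T -` {0} = {0}" by auto
  then show ?thesis unfolding mp_pinv_def using \<open>inj T\<close> by (auto dest: injD)
qed

lemma limit_of_preimages:
  fixes T :: "'a::t2_space \<Rightarrow> 'b::t2_space"
  assumes "isCont T psi" "\<And>n. chis n \<in> range T"
    and "chis \<longlonglongrightarrow> chi" "(\<lambda>n. inv T (chis n)) \<longlonglongrightarrow> psi"
  shows "T psi = chi"
proof -
  have "(\<lambda>n. T (inv T (chis n))) \<longlonglongrightarrow> T psi" using assms(1,4) by (rule isCont_tendsto_compose)
  moreover have "(\<lambda>n. T (inv T (chis n))) = chis" using assms(2) by (simp add: f_inv_into_f fun_eq_iff)
  ultimately have "chis \<longlonglongrightarrow> T psi" by simp
  then show ?thesis using assms(3) by (rule LIMSEQ_unique)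
qed

lemma approximate_by_images:
  fixes T :: "'a::metric_space \<Rightarrow> 'b::metric_space"
  assumes "isCont T psi" "inj T" "psi \<in> closure G"
  shows "\<exists>chis. (\<forall>n. chis n \<in> T ` G) \<and> chis \<longlonglongrightarrow> T psi \<and> (\<lambda>n. inv T (chis n)) \<longlonglongrightarrow> psi"
proof -
  obtain g where "\<forall>n. g n \<in> G" "g \<longlonglongrightarrow> psi" using assms(3) unfolding closure_sequential by blast
  have "(\<lambda>n. T (g n)) \<longlonglongrightarrow> T psi" using assms(1) \<open>g \<longlonglongrightarrow> psi\<close> by (rule isCont_tendsto_compose)
  moreover have "(\<lambda>n. inv T (T (g n))) = g" using \<open>inj T\<close> by (simp add: fun_eq_iff)
  moreover have "\<forall>n. T (g n) \<in> T ` G" using \<open>\<forall>n. g n \<in> G\<close> by blast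
  ultimately show ?thesis using \<open>g \<longlonglongrightarrow> psi\<close> by metis
qed

theorem proposition2p11:
  fixes Theta :: "'a::{real_inner, complete_space} set"
    and A :: "'a \<Rightarrow> 'b::{real_inner, complete_space}"
    and G :: "'b set"
    and chi :: 'a
  assumes A_cont: "bounded_linear_on (span Theta) A"
    and inj_adj: "inj (hadjoint (span Theta) A)"
    and G_sub: "subspace G"
    and G_dense: "closure G = UNIV"
    and chi_in: "chi \<in> closure (span Theta)"
  shows "(chi \<in> range (hadjoint (span Theta) A) \<longleftrightarrow>
            (\<exists>chis :: nat \<Rightarrow> 'a. \<exists>psi :: 'b.
               (\<forall>n. chis n \<in> hadjoint (span Theta) A ` G) \<and> chis \<longlonglongrightarrow> chi \<and>
               (\<lambda>n. inv (hadjoint (span Theta) A) (chis n)) \<longlonglongrightarrow> psi))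
       \<and> (\<forall>chis :: nat \<Rightarrow> 'a. \<forall>psi :: 'b.
               (\<forall>n. chis n \<in> hadjoint (span Theta) A ` G) \<and> chis \<longlonglongrightarrow> chi \<and>
               (\<lambda>n. inv (hadjoint (span Theta) A) (chis n)) \<longlonglongrightarrow> psi
             \<longrightarrow> hadjoint (span Theta) A psi = chi
               \<and> orth_proj (closure (A ` span Theta)) psi = psi
               \<and> psi = mp_pinv (hadjoint (span Theta) A) chi)"
proof -
  define T where "T = hadjoint (span Theta) A"
  have "bounded_linear T" unfolding T_def using A_cont by (rule bounded_linear_hadjoint)
  have "inj T" using inj_adj unfolding T_def .
  have limit: "T psi = chi"
    if "\<forall>n. chis n \<in> T ` G" "chis \<longlonglongrightarrow> chi" "(\<lambda>n. inv T (chis n)) \<longlonglongrightarrow> psi" for chis psi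
  proof -
    have "isCont T psi" using \<open>bounded_linear T\<close> by (rule linear_continuous_at)
    moreover have "chis n \<in> range T" for n using that(1) by blast
    ultimately show ?thesis using that(2,3) by (rule limit_of_preimages)
  qed
  have approx: "\<exists>chis psi. (\<forall>n. chis n \<in> T ` G) \<and> chis \<longlonglongrightarrow> chi \<and> (\<lambda>n. inv T (chis n)) \<longlonglongrightarrow> psi"
    if "chi = T psi" for psi
    using approximate_by_images[OF linear_continuous_at[OF \<open>bounded_linear T\<close>] \<open>inj T\<close>, of psi G]
      G_dense that by auto
  have proj: "orth_proj (closure (A ` span Theta)) psi = psi" for psi
    unfolding closure_image_eq_UNIV_if_inj_hadjoint[OF A_cont inj_adj] by (simp add: orth_proj_eq_self)
  have pinv: "mp_pinv T (T psi) = psi" for psi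
    using bounded_linear.linear[OF \<open>bounded_linear T\<close>] \<open>inj T\<close> by (rule mp_pinv_inj)
  show ?thesis
    unfolding T_def[symmetric]
  proof (intro conjI allI impI)
    show "chi \<in> range T \<longleftrightarrow>
      (\<exists>chis psi. (\<forall>n. chis n \<in> T ` G) \<and> chis \<longlonglongrightarrow> chi \<and> (\<lambda>n. inv T (chis n)) \<longlonglongrightarrow> psi)"
      using limit approx by blast
  next
    fix chis psi
    assume "(\<forall>n. chis n \<in> T ` G) \<and> chis \<longlonglongrightarrow> chi \<and> (\<lambda>n. inv T (chis n)) \<longlonglongrightarrow> psi"
    then have "T psi = chi" using limit by blast
    then show "T psi = chi" "orth_proj (closure (A ` span Theta)) psi = psi" "psi = mp_pinv T chi"
      using proj pinv by auto
  qed
qed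

end
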